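(* Assume $V=L$. Let $i\in T$ and $X\in\mathrm{IPS}_{[\subseteq i]}$. Then every nonempty set $Y\subseteq X$ which is clopen in $X$ (in the relative topology) belongs to $\mathrm{IPS}_{[\subseteq i]}$.
   Context: $T$ is the set of all nonempty finite sequences of countable ordinals, ordered by strict extension $\subset$; $[\subseteq i]=\{j\in T: j\subseteq i\}$. $\Xi$ is the set of all at most countable $\xi\subseteq T$ closed downward under $\subset$ (so $[\subseteq i]\in\Xi$). $D=2^\omega$; $D^\xi$ is the product of $\xi$ copies of $D$. For $\eta\subseteq\xi$ and $x\in D^\xi$, $x\restriction\eta$ is the restriction. For $\zeta\in\Xi$, $\mathrm{IPS}_\zeta$ is the set of all $X\subseteq D^\zeta$ for which there is a homeomorphism $H:D^\zeta\to X$ onto $X$ such that for all $x_0,x_1\in D^\zeta$ and all $\xi\in\Xi$, $\xi\subseteq\zeta$: $x_0\restriction\xi=x_1\restriction\xi\iff H(x_0)\restriction\xi=H(x_1)\restriction\xi$. *)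

theory Defs
  imports "HOL-Analysis.Analysis" "HOL-Library.Sublist"
begin

text \<open>Sequences are lists over an element type 'a (standing for countable ordinals).
  T = nonempty finite sequences, ordered by (strict) prefix.\<close>

definition Tset :: "'a list set" where
  "Tset = {j. j \<noteq> []}"

definition below :: "'a list \<Rightarrow> 'a list set" where
  "below i = {j \<in> Tset. prefix j i}"

definition Xi :: "'a list set set" where
  "Xi = {\<xi>. \<xi> \<subseteq> Tset \<and> countable \<xi> \<and>
            (\<forall>j\<in>\<xi>. \<forall>k\<in>Tset. strict_prefix k j \<longrightarrow> k \<in> \<xi>)}"

definition Dtop :: "(nat \<Rightarrow> bool) topology" where
  "Dtop = product_topology (\<lambda>_. discrete_topology UNIV) UNIV"

definition prodD :: "'a list set \<Rightarrow> ('a list \<Rightarrow> nat \<Rightarrow> bool) topology" where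
  "prodD \<xi> = product_topology (\<lambda>_. Dtop) \<xi>"

definition IPS :: "'a list set \<Rightarrow> ('a list \<Rightarrow> nat \<Rightarrow> bool) set set" where
  "IPS \<zeta> = {X. X \<subseteq> topspace (prodD \<zeta>) \<and>
     (\<exists>H. homeomorphic_map (prodD \<zeta>) (subtopology (prodD \<zeta>) X) H \<and>
        (\<forall>x0\<in>topspace (prodD \<zeta>). \<forall>x1\<in>topspace (prodD \<zeta>). \<forall>\<xi>\<in>Xi. \<xi> \<subseteq> \<zeta> \<longrightarrow>
           (restrict x0 \<xi> = restrict x1 \<xi> \<longleftrightarrow> restrict (H x0) \<xi> = restrict (H x1) \<xi>)))}"

end

theory Submission
  imports Defs
begin

(* The sets below i form a finite chain e 0, ..., e (n - 1) of prefixes of i, and every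
   \<xi> \<in> Xi with \<xi> \<subseteq> below i is an initial segment {e j | j < k}.  So a map respects Xi
   iff for every k it preserves and reflects agreement on the first k coordinates.  If H
   witnesses X \<in> IPS (below i), then Z = H -` Y is a nonempty clopen subset of D^n, and it
   suffices to find a homeomorphism G of D^n onto Z of the same kind: H \<circ> G witnesses Y.

   G is built coordinate by coordinate: G x (e k) = \<phi>\<^sub>A (x (e k)), where A is the fibre
   {z (e k) | z \<in> Z, z (e j) = G x (e j) for j < k} and \<phi>\<^sub>A is a fixed homeomorphism of D
   onto A.  By compactness Z is a union of cylinders fixing the first N bits of every
   coordinate.  Hence each fibre is a nonempty clopen subset of D, so \<phi>\<^sub>A exists, and it
   depends only on finitely many bits of the earlier coordinates, which makes G continuous. *)

section \<open>Parametrising clopen subsets of Cantor space\<close>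

definition bits :: "nat \<Rightarrow> (nat \<Rightarrow> bool) \<Rightarrow> bool list" where
  "bits N b = map b [0..<N]"

definition prepend :: "bool list \<Rightarrow> (nat \<Rightarrow> bool) \<Rightarrow> nat \<Rightarrow> bool" where
  "prepend s b l = (if l < length s then s ! l else b (l - length s))"

lemma bits_eq_iff: "bits N b = bits N b' \<longleftrightarrow> (\<forall>l<N. b l = b' l)"
  by (auto simp: bits_def map_eq_conv)

lemma length_bits [simp]: "length (bits N b) = N"
  by (simp add: bits_def)

lemma bits_prepend: "length s = N \<Longrightarrow> bits N (prepend s b) = s"
  by (auto simp: bits_def prepend_def intro: nth_equalityI)

lemma prepend_bits: "prepend (bits N b) (\<lambda>l. b (l + N)) = b"
  by (auto simp: bits_def prepend_def fun_eq_iff)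

lemma inj_prepend: "inj (prepend s)"
proof (rule injI)
  fix b b' assume "prepend s b = prepend s b'"
  then have "prepend s b (l + length s) = prepend s b' (l + length s)" for l
    by simp
  then show "b = b'"
    by (simp add: prepend_def fun_eq_iff)
qed

lemma prepend_Cons_0 [simp]: "prepend [c] b 0 = c"
  and prepend_Cons_Suc [simp]: "prepend [c] b \<circ> Suc = b"
  by (auto simp: prepend_def fun_eq_iff)

(* The input is read as c ones followed by a zero, selecting the word ss ! c, and then the
   rest of the input; the last word is selected by length ss - 1 ones without a zero. *)
fun splice :: "bool list list \<Rightarrow> (nat \<Rightarrow> bool) \<Rightarrow> nat \<Rightarrow> bool" where
  "splice [] b = b"
| "splice [s] b = prepend s b"
| "splice (s # t # ss) b = (if b 0 then splice (t # ss) (b \<circ> Suc) else prepend s (b \<circ> Suc))"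

lemma splice_local:
  "(\<And>l'. l' \<le> l + length ss \<Longrightarrow> b l' = b' l') \<Longrightarrow> splice ss b l = splice ss b' l"
proof (induction ss arbitrary: b b' rule: induct_list012)
  case (3 s t ss)
  have "b 0 = b' 0" using "3.prems"[of 0] by simp
  moreover have "splice (t # ss) (b \<circ> Suc) l = splice (t # ss) (b' \<circ> Suc) l"
    by (rule "3.IH"(2)) (use "3.prems" in auto)
  moreover have "prepend s (b \<circ> Suc) l = prepend s (b' \<circ> Suc) l"
    using "3.prems" by (simp add: prepend_def)
  ultimately show ?case by simp
qed (auto simp: prepend_def)

lemma bits_splice:
  "ss \<noteq> [] \<Longrightarrow> \<forall>s\<in>set ss. length s = N \<Longrightarrow> bits N (splice ss b) \<in> set ss"
  by (induction ss b rule: splice.induct) (auto simp: bits_prepend)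

lemma range_splice:
  assumes "ss \<noteq> []" and "\<forall>s\<in>set ss. length s = N"
  shows "range (splice ss) = {b. bits N b \<in> set ss}"
proof
  show "range (splice ss) \<subseteq> {b. bits N b \<in> set ss}"
    using bits_splice[OF assms] by blast
  show "{b. bits N b \<in> set ss} \<subseteq> range (splice ss)"
    using assms
  proof (induction ss rule: induct_list012)
    case (2 s)
    show ?case
    proof
      fix b assume "b \<in> {b. bits N b \<in> set [s]}"
      then have "splice [s] (\<lambda>l. b (l + N)) = b"
        using prepend_bits[of N b] by simp
      then show "b \<in> range (splice [s])" by (metis rangeI)
    qed
  next
    case (3 s t ss)
    show ?case
    proof
      fix b assume "b \<in> {b. bits N b \<in> set (s # t # ss)}"
      then consider "bits N b = s" | "bits N b \<in> set (t # ss)" by auto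
      then show "b \<in> range (splice (s # t # ss))"
      proof cases
        case 1
        then have "splice (s # t # ss) (prepend [False] (\<lambda>l. b (l + N))) = b"
          using prepend_bits[of N b] by simp
        then show ?thesis by (metis rangeI)
      next
        case 2
        then have "b \<in> range (splice (t # ss))"
          using "3.IH"(2) "3.prems" by auto
        then obtain c where "splice (t # ss) c = b" by blast
        then have "splice (s # t # ss) (prepend [True] c) = b" by simp
        then show ?thesis by (metis rangeI)
      qed
    qed
  qed simp
qed

lemma inj_splice:
  "distinct ss \<Longrightarrow> \<forall>s\<in>set ss. length s = N \<Longrightarrow> inj (splice ss)"
proof (induction ss rule: induct_list012)
  case (2 s)
  then show ?case by (simp add: inj_prepend)
next
  case (3 s t ss)
  have IH: "inj (splice (t # ss))"
    using "3.IH"(2) "3.prems" by simp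
  have clash: "splice (t # ss) c \<noteq> prepend s c'" for c c'
  proof
    assume "splice (t # ss) c = prepend s c'"
    then have "bits N (prepend s c') \<in> set (t # ss)"
      using bits_splice[of "t # ss" N c] "3.prems" by simp
    then show False
      using "3.prems" by (simp add: bits_prepend)
  qed
  show ?case
  proof (rule injI)
    fix b b' assume eq: "splice (s # t # ss) b = splice (s # t # ss) b'"
    have head: "b 0 = b' 0"
    proof (rule ccontr)
      assume "b 0 \<noteq> b' 0"
      then show False
        using eq clash clash[THEN not_sym] by (cases "b 0") simp_all
    qed
    have "b \<circ> Suc = b' \<circ> Suc"
    proof (cases "b 0")
      case True
      then have "splice (t # ss) (b \<circ> Suc) = splice (t # ss) (b' \<circ> Suc)"
        using eq head by simp
      then show ?thesis by (rule injD[OF IH])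
    next
      case False
      then have "prepend s (b \<circ> Suc) = prepend s (b' \<circ> Suc)"
        using eq head by simp
      then show ?thesis by (rule injD[OF inj_prepend])
    qed
    then have tail: "b (Suc l) = b' (Suc l)" for l
      by (simp add: fun_eq_iff)
    show "b = b'"
    proof
      fix l
      show "b l = b' l"
        using head tail by (cases l) simp_all
    qed
  qed
qed (auto intro: injI)

definition finitary :: "((nat \<Rightarrow> bool) \<Rightarrow> nat \<Rightarrow> bool) \<Rightarrow> bool" where
  "finitary f \<longleftrightarrow> (\<forall>l. \<exists>M. \<forall>b b'. (\<forall>l'<M. b l' = b' l') \<longrightarrow> f b l = f b' l)"

lemma finitary_splice: "finitary (splice ss)"
  unfolding finitary_def
proof
  fix l
  show "\<exists>M. \<forall>b b'. (\<forall>l'<M. b l' = b' l') \<longrightarrow> splice ss b l = splice ss b' l"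
    by (rule exI[of _ "Suc (l + length ss)"], intro allI impI splice_local) auto
qed

lemma ex_finitary_bij_betw:
  assumes "A \<noteq> {}" and "\<And>b b'. (\<forall>l<N. b l = b' l) \<Longrightarrow> b \<in> A \<Longrightarrow> b' \<in> A"
  shows "\<exists>f. bij_betw f UNIV A \<and> finitary f"
proof -
  have "finite (bits N ` A)"
    by (rule finite_subset[OF _ finite_lists_length_eq[of UNIV N]]) auto
  then obtain ss where ss: "set ss = bits N ` A" "distinct ss"
    using finite_distinct_list by blast
  have len: "\<forall>s\<in>set ss. length s = N"
    using ss(1) by auto
  have "A = {b. bits N b \<in> set ss}"
  proof (intro set_eqI iffI)
    fix b assume "b \<in> {b. bits N b \<in> set ss}"
    then obtain a where "a \<in> A" "bits N a = bits N b"
      using ss(1) by (metis imageE mem_Collect_eq)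
    then show "b \<in> A"
      using assms(2)[of a b] by (simp add: bits_eq_iff)
  qed (simp add: ss(1))
  also have "\<dots> = range (splice ss)"
    using range_splice[OF _ len] assms(1) ss(1) by force
  finally have "bij_betw (splice ss) UNIV A"
    using inj_splice[OF ss(2) len] by (simp add: bij_betw_def)
  then show ?thesis
    using finitary_splice by blast
qed

definition Cantor_param :: "(nat \<Rightarrow> bool) set \<Rightarrow> (nat \<Rightarrow> bool) \<Rightarrow> nat \<Rightarrow> bool" where
  "Cantor_param A = (SOME f. bij_betw f UNIV A \<and> finitary f)"

lemma Cantor_param:
  assumes "A \<noteq> {}" and "\<And>b b'. (\<forall>l<N. b l = b' l) \<Longrightarrow> b \<in> A \<Longrightarrow> b' \<in> A"
  shows "bij_betw (Cantor_param A) UNIV A" and "finitary (Cantor_param A)"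
proof -
  have "bij_betw (Cantor_param A) UNIV A \<and> finitary (Cantor_param A)"
    unfolding Cantor_param_def by (rule someI_ex[OF ex_finitary_bij_betw[OF assms]])
  then show "bij_betw (Cantor_param A) UNIV A" and "finitary (Cantor_param A)"
    by auto
qed

section \<open>Cylinders in finite powers of Cantor space\<close>

abbreviation Dpow :: "'i set \<Rightarrow> ('i \<Rightarrow> nat \<Rightarrow> bool) topology" where
  "Dpow I \<equiv> product_topology (\<lambda>_. Dtop) I"

lemma topspace_Dtop [simp]: "topspace Dtop = UNIV"
  by (simp add: Dtop_def PiE_UNIV_domain)

lemma compact_space_Dpow: "compact_space (Dpow I)"
  by (simp add: Dtop_def compact_space_product_topology compact_space_discrete_topology)

lemma Hausdorff_space_Dpow: "Hausdorff_space (Dpow I)"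
  by (simp add: Dtop_def Hausdorff_space_product_topology Hausdorff_space_discrete_topology)

definition cyl :: "'i set \<Rightarrow> ('i \<Rightarrow> nat \<Rightarrow> bool) \<Rightarrow> nat \<Rightarrow> ('i \<Rightarrow> nat \<Rightarrow> bool) set" where
  "cyl I x M = {y \<in> topspace (Dpow I). \<forall>q\<in>I. \<forall>l<M. y q l = x q l}"

lemma centre_in_cyl: "x \<in> topspace (Dpow I) \<Longrightarrow> x \<in> cyl I x M"
  by (simp add: cyl_def)

lemma openin_Dtop_prefix: "openin Dtop {b. \<forall>l<M. b l = c l}"
proof -
  have "{b. \<forall>l<M. b l = c l} = (\<Pi>\<^sub>E l\<in>UNIV. if l < M then {c l} else UNIV)"
    by (auto simp: PiE_iff split: if_splits)
  moreover have "finite {l. (if l < M then {c l} else UNIV) \<noteq> UNIV}"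
    by (rule finite_subset[of _ "{..<M}"]) auto
  ultimately show ?thesis
    unfolding Dtop_def by (simp add: openin_PiE_gen)
qed

lemma cyl_eq_PiE: "cyl I x M = (\<Pi>\<^sub>E q\<in>I. {b. \<forall>l<M. b l = x q l})"
  by (auto simp: cyl_def)

lemma openin_cyl: "finite I \<Longrightarrow> openin (Dpow I) (cyl I x M)"
  using openin_Dtop_prefix by (simp add: cyl_eq_PiE openin_PiE_gen)

lemma eventually_prefix_subset_Dtop:
  assumes "openin Dtop V" and "b \<in> V"
  shows "\<forall>\<^sub>F M in sequentially. {b'. \<forall>l<M. b' l = b l} \<subseteq> V"
proof -
  obtain W where W: "finite {l. W l \<noteq> UNIV}" "b \<in> (\<Pi>\<^sub>E l\<in>UNIV. W l)" "(\<Pi>\<^sub>E l\<in>UNIV. W l) \<subseteq> V"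
    using assms unfolding Dtop_def openin_product_topology_alt by force
  then obtain M where M: "{l. W l \<noteq> UNIV} \<subseteq> {..<M}"
    using finite_nat_bounded by meson
  have "{b'. \<forall>l<M'. b' l = b l} \<subseteq> V" if "M \<le> M'" for M'
  proof
    fix b' assume "b' \<in> {b'. \<forall>l<M'. b' l = b l}"
    then have "b' \<in> (\<Pi>\<^sub>E l\<in>UNIV. W l)"
      using M W(2) that by (fastforce simp: PiE_UNIV_domain)
    then show "b' \<in> V"
      using W(3) by blast
  qed
  then show ?thesis
    unfolding eventually_sequentially by blast
qed

lemma eventually_cyl_subset:
  assumes "finite I" and "openin (Dpow I) U" and "x \<in> U"
  shows "\<forall>\<^sub>F M in sequentially. cyl I x M \<subseteq> U"
proof -
  obtain V where V: "\<forall>q\<in>I. openin Dtop (V q)" "x \<in> Pi\<^sub>E I V" "Pi\<^sub>E I V \<subseteq> U"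
    using bspec[OF assms(2)[unfolded openin_product_topology_alt] assms(3)] by auto
  have "\<forall>\<^sub>F M in sequentially. \<forall>q\<in>I. {b. \<forall>l<M. b l = x q l} \<subseteq> V q"
  proof (rule eventually_ball_finite[OF assms(1)], intro ballI)
    fix q assume "q \<in> I"
    then show "\<forall>\<^sub>F M in sequentially. {b. \<forall>l<M. b l = x q l} \<subseteq> V q"
      using V(1,2) by (intro eventually_prefix_subset_Dtop) (auto simp: PiE_iff)
  qed
  then show ?thesis
  proof (rule eventually_mono)
    fix M assume "\<forall>q\<in>I. {b. \<forall>l<M. b l = x q l} \<subseteq> V q"
    then have "cyl I x M \<subseteq> Pi\<^sub>E I V"
      unfolding cyl_eq_PiE by (intro PiE_mono) simp
    then show "cyl I x M \<subseteq> U"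
      using V(3) by blast
  qed
qed

lemma continuous_map_DpowI:
  assumes "finite I" and "f \<in> topspace (Dpow I) \<rightarrow> extensional J"
    and "\<And>x p l. x \<in> topspace (Dpow I) \<Longrightarrow> p \<in> J \<Longrightarrow>
           \<forall>\<^sub>F M in sequentially. \<forall>y\<in>cyl I x M. f y p l = f x p l"
  shows "continuous_map (Dpow I) (Dpow J) f"
proof -
  have "continuous_map (Dpow I) (discrete_topology UNIV) (\<lambda>x. f x p l)" if "p \<in> J" for p l
    unfolding continuous_map_eq_topcontinuous_at topcontinuous_at_def
  proof (intro ballI conjI allI impI)
    fix x V assume x: "x \<in> topspace (Dpow I)" and V: "openin (discrete_topology UNIV) V \<and> f x p l \<in> V"
    obtain M where M: "\<forall>y\<in>cyl I x M. f y p l = f x p l"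
      using assms(3)[OF x \<open>p \<in> J\<close>] unfolding eventually_sequentially by blast
    show "\<exists>U. openin (Dpow I) U \<and> x \<in> U \<and> (\<forall>y\<in>U. f y p l \<in> V)"
    proof (intro exI conjI ballI)
      show "openin (Dpow I) (cyl I x M)" "x \<in> cyl I x M"
        using openin_cyl[OF assms(1)] centre_in_cyl[OF x] by auto
      show "f y p l \<in> V" if "y \<in> cyl I x M" for y
        using M V that by simp
    qed
  qed simp_all
  then show ?thesis
    using assms(2) unfolding Dtop_def
    by (auto simp: continuous_map_componentwise continuous_map_componentwise_UNIV)
qed

lemma clopen_Dpow_cyl_uniform:
  assumes "finite I" and "openin (Dpow I) Z" and "closedin (Dpow I) Z"
  shows "\<exists>N. \<forall>x\<in>Z. cyl I x N \<subseteq> Z"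
proof -
  have "\<exists>M. cyl I x M \<subseteq> Z" if "x \<in> Z" for x
    using eventually_cyl_subset[OF assms(1,2) that] unfolding eventually_sequentially by blast
  then obtain R where R: "\<And>x. x \<in> Z \<Longrightarrow> cyl I x (R x) \<subseteq> Z"
    by metis
  have "compactin (Dpow I) Z"
    by (rule closedin_compact_space[OF compact_space_Dpow assms(3)])
  moreover have "Z \<subseteq> \<Union> ((\<lambda>x. cyl I x (R x)) ` Z)"
  proof
    fix x assume "x \<in> Z"
    then have "x \<in> cyl I x (R x)"
      using openin_subset[OF assms(2)] by (intro centre_in_cyl) blast
    then show "x \<in> \<Union> ((\<lambda>x. cyl I x (R x)) ` Z)"
      using \<open>x \<in> Z\<close> by blast
  qed
  moreover have "\<forall>B\<in>(\<lambda>x. cyl I x (R x)) ` Z. openin (Dpow I) B"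
    using openin_cyl[OF assms(1)] by blast
  ultimately have "\<exists>\<F>. finite \<F> \<and> \<F> \<subseteq> (\<lambda>x. cyl I x (R x)) ` Z \<and> Z \<subseteq> \<Union>\<F>"
    unfolding compactin_def by meson
  then obtain F where F: "finite F" "F \<subseteq> Z" "Z \<subseteq> (\<Union>x\<in>F. cyl I x (R x))"
    unfolding ex_finite_subset_image by blast
  show ?thesis
  proof (intro exI ballI subsetI)
    fix x y assume "x \<in> Z" and y: "y \<in> cyl I x (Max (R ` F))"
    then obtain p where p: "p \<in> F" "x \<in> cyl I p (R p)"
      using F(3) by blast
    have "R p \<le> Max (R ` F)"
      using F(1) p(1) by (intro Max_ge) auto
    then have "y \<in> cyl I p (R p)"
      using y p(2) by (auto simp: cyl_def)
    then show "y \<in> Z"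
      using R F(2) p(1) by blast
  qed
qed

section \<open>A triangular parametrisation of a clopen set\<close>

locale enumerated_clopen =
  fixes e :: "nat \<Rightarrow> 'i" and n :: nat and Z :: "('i \<Rightarrow> nat \<Rightarrow> bool) set" and N :: nat
  assumes inj_e: "inj_on e {..<n}"
    and Z_subset: "Z \<subseteq> topspace (Dpow (e ` {..<n}))"
    and Z_nonempty: "Z \<noteq> {}"
    and Z_cyl: "\<And>z. z \<in> Z \<Longrightarrow> cyl (e ` {..<n}) z N \<subseteq> Z"
begin

abbreviation idx :: "'i set" where
  "idx \<equiv> e ` {..<n}"

lemma e_eq_iff [simp]: "j < n \<Longrightarrow> k < n \<Longrightarrow> e j = e k \<longleftrightarrow> j = k"
  using inj_e by (auto dest: inj_onD)

definition fibre :: "nat \<Rightarrow> ('i \<Rightarrow> nat \<Rightarrow> bool) \<Rightarrow> (nat \<Rightarrow> bool) set" where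
  "fibre k y = {z (e k) | z. z \<in> Z \<and> (\<forall>j<k. z (e j) = y (e j))}"

lemma fibre_cong: "(\<And>j. j < k \<Longrightarrow> y (e j) = y' (e j)) \<Longrightarrow> fibre k y = fibre k y'"
  unfolding fibre_def by auto

lemma fibre_perturb:
  assumes k: "k < n" and b: "b \<in> fibre k y" and b': "\<forall>l<N. b' l = b l"
    and y': "\<And>j l. j < k \<Longrightarrow> l < N \<Longrightarrow> y' (e j) l = y (e j) l"
  shows "b' \<in> fibre k y'"
proof -
  obtain z where z: "z \<in> Z" "\<forall>j<k. z (e j) = y (e j)" "z (e k) = b"
    using b unfolding fibre_def by blast
  define z' where "z' q = (if q = e k then b' else if q \<in> e ` {..<k} then y' q else z q)" for q
  have z'_e: "z' (e j) = (if j = k then b' else if j < k then y' (e j) else z (e j))" if "j < n" for j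
    using that k by (auto simp: z'_def)
  have "z' \<in> cyl idx z N"
    unfolding cyl_def
  proof (intro CollectI conjI ballI allI impI)
    have "z \<in> extensional idx"
      using z(1) Z_subset by (auto simp: PiE_iff)
    then show "z' \<in> topspace (Dpow idx)"
      using k by (auto simp: z'_def PiE_iff extensional_def)
    fix q l assume "q \<in> idx" and "l < N"
    then obtain j where "j < n" "q = e j"
      by blast
    then show "z' q l = z q l"
      using z(2,3) b' y' \<open>l < N\<close> z'_e by auto
  qed
  then have "z' \<in> Z"
    using Z_cyl[OF z(1)] by blast
  moreover have "\<forall>j<k. z' (e j) = y' (e j)" and "z' (e k) = b'"
    using k z'_e by auto
  ultimately show ?thesis
    unfolding fibre_def by blast
qed

lemma fibre_cyl: "k < n \<Longrightarrow> b \<in> fibre k y \<Longrightarrow> \<forall>l<N. b' l = b l \<Longrightarrow> b' \<in> fibre k y"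
  by (rule fibre_perturb) auto

lemma fibre_eq_if_bits_agree:
  assumes "k < n" and "\<And>j l. j < k \<Longrightarrow> l < N \<Longrightarrow> y' (e j) l = y (e j) l"
  shows "fibre k y' = fibre k y"
proof (intro set_eqI iffI)
  fix b
  show "b \<in> fibre k y'" if "b \<in> fibre k y"
    using that by (rule fibre_perturb[OF assms(1)]) (use assms(2) in auto)
  show "b \<in> fibre k y" if "b \<in> fibre k y'"
    using that by (rule fibre_perturb[OF assms(1)]) (use assms(2) in auto)
qed

lemma Cantor_param_fibre:
  assumes "k < n" and "fibre k y \<noteq> {}"
  shows "bij_betw (Cantor_param (fibre k y)) UNIV (fibre k y)"
    and "finitary (Cantor_param (fibre k y))"
  using Cantor_param[OF assms(2), of N] fibre_cyl[OF assms(1)] by auto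

primrec stage :: "('i \<Rightarrow> nat \<Rightarrow> bool) \<Rightarrow> nat \<Rightarrow> 'i \<Rightarrow> nat \<Rightarrow> bool" where
  "stage x 0 = (\<lambda>_. undefined)"
| "stage x (Suc k) = (stage x k)(e k := Cantor_param (fibre k (stage x k)) (x (e k)))"

lemma stage_stable: "j < k \<Longrightarrow> k \<le> n \<Longrightarrow> stage x k (e j) = stage x (Suc j) (e j)"
  by (induction k) (auto simp: less_Suc_eq)

lemma stage_cong:
  "k \<le> n \<Longrightarrow> (\<And>j. j < k \<Longrightarrow> x (e j) = x' (e j)) \<Longrightarrow> j < k \<Longrightarrow> stage x k (e j) = stage x' k (e j)"
proof (induction k arbitrary: j)
  case (Suc k)
  have "fibre k (stage x k) = fibre k (stage x' k)"
    using Suc by (intro fibre_cong) auto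
  then show ?case
    using Suc by (cases "j = k") auto
qed simp

lemma stage_extendable: "k \<le> n \<Longrightarrow> \<exists>z\<in>Z. \<forall>j<k. z (e j) = stage x k (e j)"
proof (induction k)
  case 0
  then show ?case using Z_nonempty by auto
next
  case (Suc k)
  then obtain z where z: "z \<in> Z" "\<forall>j<k. z (e j) = stage x k (e j)"
    by auto
  have k: "k < n"
    using Suc.prems by simp
  have "z (e k) \<in> fibre k (stage x k)"
    unfolding fibre_def using z by auto
  then have "stage x (Suc k) (e k) \<in> fibre k (stage x k)"
    using bij_betwE[OF Cantor_param_fibre(1)[OF k]] by auto
  then obtain z' where "z' \<in> Z" "\<forall>j<k. z' (e j) = stage x k (e j)" "z' (e k) = stage x (Suc k) (e k)"
    unfolding fibre_def by auto
  then show ?case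
    using k by (auto simp: less_Suc_eq)
qed

lemma fibre_stage_nonempty: "k < n \<Longrightarrow> fibre k (stage x k) \<noteq> {}"
  using stage_extendable[of k x] unfolding fibre_def by fastforce

definition Z_param :: "('i \<Rightarrow> nat \<Rightarrow> bool) \<Rightarrow> 'i \<Rightarrow> nat \<Rightarrow> bool" where
  "Z_param x = restrict (stage x n) idx"

lemma Z_param_e: "j < n \<Longrightarrow> Z_param x (e j) = stage x (Suc j) (e j)"
  unfolding Z_param_def using stage_stable[of j n x] by simp

lemma eq_restrict_if_agree:
  "z \<in> topspace (Dpow idx) \<Longrightarrow> \<forall>j<n. z (e j) = w (e j) \<Longrightarrow> z = restrict w idx"
  by (auto simp: PiE_iff extensional_def fun_eq_iff)

lemma Z_param_in_Z: "Z_param x \<in> Z"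
proof -
  obtain z where "z \<in> Z" "\<forall>j<n. z (e j) = stage x n (e j)"
    using stage_extendable[of n x] by auto
  moreover have "z = Z_param x"
    unfolding Z_param_def using calculation Z_subset by (intro eq_restrict_if_agree) auto
  ultimately show ?thesis
    by simp
qed

lemma Z_param_agree_iff:
  assumes "k \<le> n"
  shows "(\<forall>j<k. Z_param x (e j) = Z_param x' (e j)) \<longleftrightarrow> (\<forall>j<k. x (e j) = x' (e j))"
  using assms
proof (induction k)
  case (Suc k)
  have k: "k < n"
    using Suc.prems by simp
  show ?case
  proof (cases "\<forall>j<k. x (e j) = x' (e j)")
    case True
    define A where "A = fibre k (stage x k)"
    have "fibre k (stage x' k) = A"
      unfolding A_def using True k by (intro fibre_cong stage_cong[symmetric]) auto
    then have "Z_param x (e k) = Z_param x' (e k) \<longleftrightarrow> Cantor_param A (x (e k)) = Cantor_param A (x' (e k))"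
      using k by (simp add: Z_param_e A_def)
    also have "\<dots> \<longleftrightarrow> x (e k) = x' (e k)"
      using bij_betw_imp_inj_on[OF Cantor_param_fibre(1)[OF k fibre_stage_nonempty[OF k]]]
      unfolding A_def by (auto dest: injD)
    finally show ?thesis
      using Suc k by (auto simp: less_Suc_eq)
  next
    case False
    then show ?thesis
      using Suc by (auto simp: less_Suc_eq)
  qed
qed simp

lemma Z_param_surj:
  assumes z: "z \<in> Z"
  shows "\<exists>x\<in>topspace (Dpow idx). Z_param x = z"
proof -
  define x where "x = restrict (\<lambda>q. let k = the_inv_into {..<n} e q in
                     inv_into UNIV (Cantor_param (fibre k z)) (z q)) idx"
  have x_e: "x (e k) = inv_into UNIV (Cantor_param (fibre k z)) (z (e k))" if "k < n" for k
    unfolding x_def using that the_inv_into_f_f[OF inj_e, of k] by simp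
  have stage_eq: "\<forall>j<k. stage x k (e j) = z (e j)" if "k \<le> n" for k
    using that
  proof (induction k)
    case (Suc k)
    then have IH: "\<forall>j<k. stage x k (e j) = z (e j)" and k: "k < n"
      by simp_all
    have A: "fibre k (stage x k) = fibre k z"
      using IH by (intro fibre_cong) simp
    have "z (e k) \<in> fibre k z"
      unfolding fibre_def using z by auto
    then have "Cantor_param (fibre k z) (x (e k)) = z (e k)"
      using bij_betw_inv_into_right[OF Cantor_param_fibre(1)[OF k]] x_e[OF k] by auto
    then show ?case
      using IH k A by (auto simp: less_Suc_eq)
  qed simp
  have "z = Z_param x"
    unfolding Z_param_def using z Z_subset stage_eq[of n] by (intro eq_restrict_if_agree) auto
  moreover have "x \<in> topspace (Dpow idx)"
    unfolding x_def by simp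
  ultimately show ?thesis
    by auto
qed

lemma eventually_stage_bit:
  assumes x: "x \<in> topspace (Dpow idx)"
  shows "k \<le> n \<Longrightarrow> j < k \<Longrightarrow>
    \<forall>\<^sub>F M in sequentially. \<forall>y\<in>cyl idx x M. stage y k (e j) l = stage x k (e j) l"
proof (induction k arbitrary: j l)
  case (Suc k)
  have k: "k < n"
    using Suc.prems by simp
  show ?case
  proof (cases "j < k")
    case True
    then show ?thesis
      using Suc k by simp
  next
    case False
    then have j: "j = k"
      using Suc.prems by simp
    define A where "A = fibre k (stage x k)"
    have "\<forall>\<^sub>F M in sequentially. \<forall>(j', l')\<in>{..<k} \<times> {..<N}.
            \<forall>y\<in>cyl idx x M. stage y k (e j') l' = stage x k (e j') l'"
      using Suc k by (intro eventually_ball_finite) auto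
    then have fibre_eq: "\<forall>\<^sub>F M in sequentially. \<forall>y\<in>cyl idx x M. fibre k (stage y k) = A"
    proof eventually_elim
      case (elim M)
      show ?case
      proof
        fix y assume y: "y \<in> cyl idx x M"
        show "fibre k (stage y k) = A"
          unfolding A_def
        proof (rule fibre_eq_if_bits_agree[OF k])
          fix j' l' assume "j' < k" "l' < N"
          then show "stage y k (e j') l' = stage x k (e j') l'"
            using elim y by blast
        qed
      qed
    qed
    obtain M where M: "\<And>b b'. \<forall>l'<M. b l' = b' l' \<Longrightarrow> Cantor_param A b l = Cantor_param A b' l"
      using Cantor_param_fibre(2)[OF k fibre_stage_nonempty[OF k]] unfolding finitary_def A_def by blast
    have "\<forall>\<^sub>F M' in sequentially. \<forall>y\<in>cyl idx x M'. Cantor_param A (y (e k)) l = Cantor_param A (x (e k)) l"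
      using eventually_ge_at_top[of M]
    proof eventually_elim
      case (elim M')
      show ?case
      proof
        fix y assume "y \<in> cyl idx x M'"
        then have "\<forall>l'<M. y (e k) l' = x (e k) l'"
          using elim k by (auto simp: cyl_def)
        then show "Cantor_param A (y (e k)) l = Cantor_param A (x (e k)) l"
          by (rule M)
      qed
    qed
    with fibre_eq show ?thesis
      unfolding j by eventually_elim (simp add: A_def)
  qed
qed simp

lemma continuous_map_Z_param: "continuous_map (Dpow idx) (Dpow idx) Z_param"
proof (rule continuous_map_DpowI)
  fix x p l assume x: "x \<in> topspace (Dpow idx)" and "p \<in> idx"
  then obtain j where j: "j < n" "p = e j"
    by blast
  have "\<forall>\<^sub>F M in sequentially. \<forall>y\<in>cyl idx x M. stage y (Suc j) (e j) l = stage x (Suc j) (e j) l"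
    using j by (intro eventually_stage_bit[OF x]) auto
  then show "\<forall>\<^sub>F M in sequentially. \<forall>y\<in>cyl idx x M. Z_param y p l = Z_param x p l"
    using j by (simp add: Z_param_e)
qed (auto simp: Z_param_def)

lemma homeomorphic_map_Z_param: "homeomorphic_map (Dpow idx) (subtopology (Dpow idx) Z) Z_param"
proof (rule continuous_imp_homeomorphic_map)
  show "continuous_map (Dpow idx) (subtopology (Dpow idx) Z) Z_param"
    using continuous_map_Z_param Z_param_in_Z by (auto simp: continuous_map_in_subtopology)
  show "Hausdorff_space (subtopology (Dpow idx) Z)"
    using Hausdorff_space_Dpow by (rule Hausdorff_space_subtopology)
  have "topspace (subtopology (Dpow idx) Z) = Z"
    using Z_subset by auto
  then show "Z_param ` topspace (Dpow idx) = topspace (subtopology (Dpow idx) Z)"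
    using Z_param_in_Z Z_param_surj by blast
  show "inj_on Z_param (topspace (Dpow idx))"
  proof (rule inj_onI)
    fix x x' assume x: "x \<in> topspace (Dpow idx)" and x': "x' \<in> topspace (Dpow idx)"
      and "Z_param x = Z_param x'"
    then have "\<forall>j<n. x (e j) = x' (e j)"
      using Z_param_agree_iff[of n x x'] by simp
    then have "x = restrict x' idx"
      by (rule eq_restrict_if_agree[OF x])
    also have "\<dots> = x'"
      using x' by (simp add: PiE_iff extensional_restrict)
    finally show "x = x'" .
  qed
qed (rule compact_space_Dpow)

end

lemma triangular_homeomorphism_onto_clopen:
  fixes e :: "nat \<Rightarrow> 'i"
  assumes "inj_on e {..<n}" and "Z \<noteq> {}"
    and "openin (Dpow (e ` {..<n})) Z" and "closedin (Dpow (e ` {..<n})) Z"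
  shows "\<exists>G. homeomorphic_map (Dpow (e ` {..<n})) (subtopology (Dpow (e ` {..<n})) Z) G \<and>
             (\<forall>k\<le>n. \<forall>x x'. (\<forall>j<k. G x (e j) = G x' (e j)) \<longleftrightarrow> (\<forall>j<k. x (e j) = x' (e j)))"
proof -
  obtain N where N: "\<forall>z\<in>Z. cyl (e ` {..<n}) z N \<subseteq> Z"
    using clopen_Dpow_cyl_uniform assms(3,4) by blast
  interpret enumerated_clopen e n Z N
    by unfold_locales (use assms(1,2) openin_subset[OF assms(3)] N in auto)
  show ?thesis
    using homeomorphic_map_Z_param Z_param_agree_iff by blast
qed

section \<open>The chain below a sequence\<close>

lemma clopen_preimage_homeomorphic_map:
  assumes H: "homeomorphic_map X (subtopology X S) H" and "T \<subseteq> S" and "T \<noteq> {}"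
    and "openin (subtopology X S) T" and "closedin (subtopology X S) T"
  defines "Z \<equiv> {x \<in> topspace X. H x \<in> T}"
  shows "openin X Z" and "closedin X Z" and "Z \<noteq> {}"
    and "homeomorphic_map (subtopology X Z) (subtopology X T) H"
proof -
  have H_cont: "continuous_map X (subtopology X S) H"
    using H by (rule homeomorphic_imp_continuous_map)
  show "openin X Z"
    unfolding Z_def using H_cont assms(4) by (rule openin_continuous_map_preimage)
  show "closedin X Z"
    unfolding Z_def using H_cont assms(5) by (rule closedin_continuous_map_preimage)
  have "T \<subseteq> H ` topspace X"
    using homeomorphic_imp_surjective_map[OF H] assms(2) closedin_subset[OF assms(5)] by auto
  then show "Z \<noteq> {}"
    using assms(3) unfolding Z_def by blast
  have "homeomorphic_map (subtopology X Z) (subtopology (subtopology X S) T) H"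
    unfolding Z_def using H by (rule homeomorphic_map_subtopologies_alt) auto
  moreover have "subtopology (subtopology X S) T = subtopology X T"
    using assms(2) by (simp add: subtopology_subtopology Int_absorb1)
  ultimately show "homeomorphic_map (subtopology X Z) (subtopology X T) H"
    by simp
qed

lemma restrict_image_lessThan_eq_iff:
  "restrict x (e ` {..<k}) = restrict y (e ` {..<k}) \<longleftrightarrow> (\<forall>j<k. x (e j) = y (e j))"
  by (auto simp: fun_eq_iff restrict_def)

lemma below_eq_image_take: "below i = (\<lambda>k. take (Suc k) i) ` {..<length i}"
proof
  show "below i \<subseteq> (\<lambda>k. take (Suc k) i) ` {..<length i}"
  proof
    fix j assume "j \<in> below i"
    then have "j \<noteq> []" and "prefix j i"
      unfolding below_def Tset_def by auto
    then obtain zs where "i = j @ zs"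
      by (auto simp: prefix_def)
    moreover have "Suc (length j - 1) = length j"
      using \<open>j \<noteq> []\<close> by simp
    ultimately have "j = take (Suc (length j - 1)) i" and "length j - 1 < length i"
      by simp_all
    then show "j \<in> (\<lambda>k. take (Suc k) i) ` {..<length i}"
      by blast
  qed
  show "(\<lambda>k. take (Suc k) i) ` {..<length i} \<subseteq> below i"
    unfolding below_def Tset_def by (auto simp: take_is_prefix)
qed

lemma inj_on_take_Suc: "inj_on (\<lambda>k. take (Suc k) i) {..<length i}"
proof (rule inj_onI)
  fix a b assume "a \<in> {..<length i}" "b \<in> {..<length i}" "take (Suc a) i = take (Suc b) i"
  then have "length (take (Suc a) i) = length (take (Suc b) i)" and "a < length i" "b < length i"
    by simp_all
  then show "a = b"
    by simp
qed

lemma prodD_below: "prodD (below i) = Dpow ((\<lambda>k. take (Suc k) i) ` {..<length i})"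
  unfolding prodD_def below_eq_image_take ..

lemma downward_closed_eq_lessThan:
  fixes S :: "nat set"
  assumes "S \<subseteq> {..<n}" and "\<And>a b. b \<in> S \<Longrightarrow> a \<le> b \<Longrightarrow> a \<in> S"
  obtains k where "k \<le> n" and "S = {..<k}"
proof (cases "S = {}")
  case True
  then show ?thesis
    using that[of 0] by simp
next
  case False
  have "finite S"
    using assms(1) finite_subset by blast
  then have "Max S \<in> S" and "\<And>a. a \<in> S \<Longrightarrow> a \<le> Max S"
    using False by simp_all
  have "S = {..<Suc (Max S)}"
  proof (intro set_eqI iffI)
    fix a
    show "a \<in> {..<Suc (Max S)}" if "a \<in> S"
      using that \<open>\<And>a. a \<in> S \<Longrightarrow> a \<le> Max S\<close> by (simp add: less_Suc_eq_le)
    show "a \<in> S" if "a \<in> {..<Suc (Max S)}"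
      using that assms(2)[OF \<open>Max S \<in> S\<close>] by (simp add: less_Suc_eq_le)
  qed
  moreover have "Suc (Max S) \<le> n"
    using \<open>Max S \<in> S\<close> assms(1) by auto
  ultimately show ?thesis
    using that by blast
qed

lemma Xi_take_downward:
  assumes "\<xi> \<in> Xi" and "take (Suc b) i \<in> \<xi>" and "a \<le> b" and "b < length i"
  shows "take (Suc a) i \<in> \<xi>"
proof (cases "a = b")
  case False
  have "prefix (take (Suc a) i) (take (Suc b) i)"
    using assms(3) take_is_prefix[of "Suc a" "take (Suc b) i"] by (simp add: min_def)
  moreover have "take (Suc a) i \<noteq> take (Suc b) i"
    using False assms(3,4) by (auto dest: arg_cong[where f = length])
  ultimately have "strict_prefix (take (Suc a) i) (take (Suc b) i)"
    by (auto simp: strict_prefix_def)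
  moreover have "take (Suc a) i \<in> Tset"
    using assms(4) by (auto simp: Tset_def)
  ultimately show ?thesis
    using assms(1,2) unfolding Xi_def by blast
qed (use assms(2) in simp)

lemma Xi_subset_below:
  assumes "\<xi> \<in> Xi" and "\<xi> \<subseteq> below i"
  obtains k where "k \<le> length i" and "\<xi> = (\<lambda>k. take (Suc k) i) ` {..<k}"
proof -
  define S where "S = {k. k < length i \<and> take (Suc k) i \<in> \<xi>}"
  have \<xi>: "\<xi> = (\<lambda>k. take (Suc k) i) ` S"
  proof
    show "\<xi> \<subseteq> (\<lambda>k. take (Suc k) i) ` S"
    proof
      fix q assume "q \<in> \<xi>"
      moreover obtain j where "j < length i" and "q = take (Suc j) i"
        using \<open>q \<in> \<xi>\<close> assms(2) unfolding below_eq_image_take by blast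
      ultimately show "q \<in> (\<lambda>k. take (Suc k) i) ` S"
        unfolding S_def by blast
    qed
    show "(\<lambda>k. take (Suc k) i) ` S \<subseteq> \<xi>"
      unfolding S_def by blast
  qed
  obtain k where "k \<le> length i" and "S = {..<k}"
  proof (rule downward_closed_eq_lessThan)
    show "S \<subseteq> {..<length i}"
      unfolding S_def by blast
    show "a \<in> S" if "b \<in> S" and "a \<le> b" for a b
      using that Xi_take_downward[OF assms(1)] unfolding S_def by auto
  qed
  then show ?thesis
    using that \<xi> by blast
qed

definition respects_Xi :: "'a list set \<Rightarrow> (('a list \<Rightarrow> nat \<Rightarrow> bool) \<Rightarrow> 'a list \<Rightarrow> nat \<Rightarrow> bool) \<Rightarrow> bool" where
  "respects_Xi \<zeta> H \<longleftrightarrow>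
     (\<forall>x0\<in>topspace (prodD \<zeta>). \<forall>x1\<in>topspace (prodD \<zeta>). \<forall>\<xi>\<in>Xi. \<xi> \<subseteq> \<zeta> \<longrightarrow>
        (restrict x0 \<xi> = restrict x1 \<xi> \<longleftrightarrow> restrict (H x0) \<xi> = restrict (H x1) \<xi>))"

lemma IPS_iff: "X \<in> IPS \<zeta> \<longleftrightarrow> X \<subseteq> topspace (prodD \<zeta>) \<and>
    (\<exists>H. homeomorphic_map (prodD \<zeta>) (subtopology (prodD \<zeta>) X) H \<and> respects_Xi \<zeta> H)"
  by (simp add: IPS_def respects_Xi_def)

lemma respects_Xi_comp:
  assumes "respects_Xi \<zeta> H" and "respects_Xi \<zeta> G" and "G \<in> topspace (prodD \<zeta>) \<rightarrow> topspace (prodD \<zeta>)"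
  shows "respects_Xi \<zeta> (H \<circ> G)"
  using assms unfolding respects_Xi_def by (simp add: Pi_iff)

lemma respects_Xi_below:
  assumes "\<forall>k\<le>length i. \<forall>x x'. (\<forall>j<k. G x (take (Suc j) i) = G x' (take (Suc j) i)) \<longleftrightarrow>
                                 (\<forall>j<k. x (take (Suc j) i) = x' (take (Suc j) i))"
  shows "respects_Xi (below i) G"
  unfolding respects_Xi_def
proof (intro ballI impI)
  fix x x' \<xi> assume "\<xi> \<in> Xi" and "\<xi> \<subseteq> below i"
  then obtain k where k: "k \<le> length i" and \<xi>: "\<xi> = (\<lambda>k. take (Suc k) i) ` {..<k}"
    by (rule Xi_subset_below)
  have "(\<forall>j<k. G x (take (Suc j) i) = G x' (take (Suc j) i)) \<longleftrightarrow>
        (\<forall>j<k. x (take (Suc j) i) = x' (take (Suc j) i))"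
    using assms k by blast
  then show "restrict x \<xi> = restrict x' \<xi> \<longleftrightarrow> restrict (G x) \<xi> = restrict (G x') \<xi>"
    unfolding \<xi> restrict_image_lessThan_eq_iff by blast
qed

lemma clopen_below_parametrization:
  assumes "openin (prodD (below i)) Z" and "closedin (prodD (below i)) Z" and "Z \<noteq> {}"
  obtains G where "homeomorphic_map (prodD (below i)) (subtopology (prodD (below i)) Z) G"
    and "respects_Xi (below i) G"
proof -
  have "\<exists>G. homeomorphic_map (prodD (below i)) (subtopology (prodD (below i)) Z) G \<and>
      (\<forall>k\<le>length i. \<forall>x x'. (\<forall>j<k. G x (take (Suc j) i) = G x' (take (Suc j) i)) \<longleftrightarrow>
                                 (\<forall>j<k. x (take (Suc j) i) = x' (take (Suc j) i)))"
    unfolding prodD_below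
    by (rule triangular_homeomorphism_onto_clopen[OF inj_on_take_Suc assms(3)])
      (use assms(1,2) in \<open>simp_all add: prodD_below\<close>)
  then obtain G where G: "homeomorphic_map (prodD (below i)) (subtopology (prodD (below i)) Z) G"
    and G_agree: "\<forall>k\<le>length i. \<forall>x x'. (\<forall>j<k. G x (take (Suc j) i) = G x' (take (Suc j) i)) \<longleftrightarrow>
                                 (\<forall>j<k. x (take (Suc j) i) = x' (take (Suc j) i))"
    by blast
  show ?thesis
    by (rule that[OF G respects_Xi_below[OF G_agree]])
qed

theorem lemma2p17:
  fixes i :: "'a list" and X Y :: "('a list \<Rightarrow> nat \<Rightarrow> bool) set"
  assumes "i \<in> Tset"
    and "X \<in> IPS (below i)"
    and "Y \<noteq> {}" and "Y \<subseteq> X"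
    and "openin (subtopology (prodD (below i)) X) Y"
    and "closedin (subtopology (prodD (below i)) X) Y"
  shows "Y \<in> IPS (below i)"
proof -
  define P where "P = prodD (below i)"
  obtain H where X: "X \<subseteq> topspace P" and H: "homeomorphic_map P (subtopology P X) H"
    and H_Xi: "respects_Xi (below i) H"
    using assms(2) unfolding IPS_iff P_def by blast
  define Z where "Z = {x \<in> topspace P. H x \<in> Y}"
  note Z = clopen_preimage_homeomorphic_map[OF H assms(4,3) assms(5,6)[folded P_def], folded Z_def]
  obtain G where G: "homeomorphic_map P (subtopology P Z) G" and G_Xi: "respects_Xi (below i) G"
    using clopen_below_parametrization[OF Z(1,2,3)[unfolded P_def]] unfolding P_def by blast
  have "G \<in> topspace P \<rightarrow> topspace P"
    using homeomorphic_imp_surjective_map[OF G] by auto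
  show ?thesis
    unfolding IPS_iff
  proof (intro conjI exI)
    show "Y \<subseteq> topspace (prodD (below i))"
      using X assms(4) unfolding P_def by blast
    show "homeomorphic_map (prodD (below i)) (subtopology (prodD (below i)) Y) (H \<circ> G)"
      using homeomorphic_map_compose[OF G Z(4)] unfolding P_def .
    show "respects_Xi (below i) (H \<circ> G)"
      using respects_Xi_comp[OF H_Xi G_Xi] \<open>G \<in> topspace P \<rightarrow> topspace P\<close> unfolding P_def .
  qed
qed

end
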